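(* For any $d\ge0$, $k\ge2$ and $\theta\in(0,1]$ such that $k\theta^2>2$, $$\mathbb{P}\Big[\sum_{i\in L_d}X^{(d)}_i\le k^d/2\ \Big|\ X^{(0)}=1\Big]\le \frac{1}{\theta^2k-1}.$$
   Context: Broadcast (Ising) tree model: complete $k$-ary tree of depth $d$ with root $\rho$; $L_d$ = leaves; $\sigma_\rho$ uniform on $\{0,1\}$; each child $v$ of $u$ independently has $\sigma_v=\sigma_u$ with probability $(1+\theta)/2$ and $1-\sigma_u$ otherwise; $X^{(r)}=(\sigma_v)_{v\in L_r}$. *)

theory Defs
  imports Main "HOL-Library.FuncSet" Complex_Main
begin

text \<open>Complete k-ary tree of depth d: vertices are words over {0..<k} of length at most d;
  the root is [] and the children of u are i # u for i < k. Leaves L_d are the words of length d.\<close>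

definition tree_vertices :: "nat \<Rightarrow> nat \<Rightarrow> nat list set" where
  "tree_vertices k d = {v. length v \<le> d \<and> set v \<subseteq> {..<k}}"

definition tree_leaves :: "nat \<Rightarrow> nat \<Rightarrow> nat list set" where
  "tree_leaves k d = {v. length v = d \<and> set v \<subseteq> {..<k}}"

definition labelings :: "nat \<Rightarrow> nat \<Rightarrow> (nat list \<Rightarrow> nat) set" where
  "labelings k d = PiE (tree_vertices k d) (\<lambda>_. {0, 1})"

definition edge_prob :: "real \<Rightarrow> nat \<Rightarrow> nat \<Rightarrow> real" where
  "edge_prob \<theta> a b = (if a = b then (1 + \<theta>) / 2 else (1 - \<theta>) / 2)"

text \<open>Probability of a configuration in the broadcast model (uniform root spin).
  The parent of a non-root vertex v is tl v.\<close>
definition broadcast_weight :: "nat \<Rightarrow> nat \<Rightarrow> real \<Rightarrow> (nat list \<Rightarrow> nat) \<Rightarrow> real" where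
  "broadcast_weight k d \<theta> \<sigma> =
     (1/2) * (\<Prod>v \<in> tree_vertices k d - {[]}. edge_prob \<theta> (\<sigma> (tl v)) (\<sigma> v))"

definition broadcast_prob :: "nat \<Rightarrow> nat \<Rightarrow> real \<Rightarrow> ((nat list \<Rightarrow> nat) \<Rightarrow> bool) \<Rightarrow> real" where
  "broadcast_prob k d \<theta> E = (\<Sum>\<sigma> \<in> {\<sigma> \<in> labelings k d. E \<sigma>}. broadcast_weight k d \<theta> \<sigma>)"

definition broadcast_cond_prob ::
  "nat \<Rightarrow> nat \<Rightarrow> real \<Rightarrow> ((nat list \<Rightarrow> nat) \<Rightarrow> bool) \<Rightarrow> ((nat list \<Rightarrow> nat) \<Rightarrow> bool) \<Rightarrow> real" where
  "broadcast_cond_prob k d \<theta> E F =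
     broadcast_prob k d \<theta> (\<lambda>\<sigma>. E \<sigma> \<and> F \<sigma>) / broadcast_prob k d \<theta> F"

end

theory Submission
  imports Defs "HOL-Analysis.Finite_Product_Measure"
begin

(*
  Condition on root spin 1 and let Z(d) = \<Sum>v\<in>L(d). (2 \<sigma>(v) - 1) be the leaf magnetization.
  Given the spins up to depth d, the leaves of depth d + 1 flip independently of each other,
  so E Z(d+1) = k\<theta> E Z(d) and E Z(d+1)\<^sup>2 = (k\<theta>)\<^sup>2 E Z(d)\<^sup>2 + (1 - \<theta>\<^sup>2) k^(d+1).
  Hence E Z(d) = m := (k\<theta>)^d and (\<theta>\<^sup>2k - 1) Var Z(d) = (1 - \<theta>\<^sup>2) (m\<^sup>2 - k^d) \<le> m\<^sup>2.
  At most half of the leaves carry spin 1 iff Z(d) \<le> 0, which by Chebyshev's inequality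
  has probability at most Var Z(d) / m\<^sup>2 \<le> 1 / (\<theta>\<^sup>2k - 1).
*)

lemma finite_tree_vertices: "finite (tree_vertices k d)"
proof -
  have "tree_vertices k d = {xs. set xs \<subseteq> {..<k} \<and> length xs \<le> d}"
    unfolding tree_vertices_def by auto
  then show ?thesis using finite_lists_length_le[of "{..<k}" d] by simp
qed

lemma finite_tree_leaves: "finite (tree_leaves k d)"
  by (rule finite_subset[OF _ finite_tree_vertices[of k d]])
    (auto simp: tree_leaves_def tree_vertices_def)

lemma finite_labelings: "finite (labelings k d)"
  unfolding labelings_def by (rule finite_PiE) (auto simp: finite_tree_vertices)

lemma tree_vertices_0: "tree_vertices k 0 = {[]}"
  unfolding tree_vertices_def by auto

lemma tree_leaves_0: "tree_leaves k 0 = {[]}"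
  unfolding tree_leaves_def by auto

lemma tree_vertices_Suc: "tree_vertices k (Suc d) = tree_vertices k d \<union> tree_leaves k (Suc d)"
  unfolding tree_leaves_def tree_vertices_def by auto

lemma tree_vertices_Int_leaves_Suc: "tree_vertices k d \<inter> tree_leaves k (Suc d) = {}"
  unfolding tree_leaves_def tree_vertices_def by auto

lemma Nil_in_tree_vertices: "[] \<in> tree_vertices k d"
  unfolding tree_vertices_def by auto

lemma Nil_notin_tree_leaves_Suc: "[] \<notin> tree_leaves k (Suc d)"
  unfolding tree_leaves_def by auto

lemma tl_in_tree_vertices: "v \<in> tree_vertices k d \<Longrightarrow> tl v \<in> tree_vertices k d"
  unfolding tree_vertices_def by (cases v) auto

lemma tl_leaf_in_tree_vertices: "v \<in> tree_leaves k (Suc d) \<Longrightarrow> tl v \<in> tree_vertices k d"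
  unfolding tree_leaves_def tree_vertices_def by (cases v) auto

lemma tree_leaves_Suc: "tree_leaves k (Suc d) = (\<lambda>(i, u). i # u) ` ({..<k} \<times> tree_leaves k d)"
proof (rule set_eqI)
  fix v
  show "v \<in> tree_leaves k (Suc d) \<longleftrightarrow> v \<in> (\<lambda>(i, u). i # u) ` ({..<k} \<times> tree_leaves k d)"
    unfolding tree_leaves_def by (cases v) auto
qed

lemma inj_on_Cons_pair: "inj_on (\<lambda>(i, u). i # u) A"
  by (auto simp: inj_on_def)

lemma card_tree_leaves: "card (tree_leaves k d) = k ^ d"
  by (induction d)
    (simp_all add: tree_leaves_0 tree_leaves_Suc card_image[OF inj_on_Cons_pair]
      card_cartesian_product)

lemma sum_tree_leaves_Suc_tl:
  fixes h :: "nat list \<Rightarrow> 'a :: semiring_1"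
  shows "(\<Sum>v\<in>tree_leaves k (Suc d). h (tl v)) = of_nat k * (\<Sum>u\<in>tree_leaves k d. h u)"
proof -
  have "(\<Sum>v\<in>tree_leaves k (Suc d). h (tl v)) = (\<Sum>(i, u)\<in>{..<k} \<times> tree_leaves k d. h u)"
    unfolding tree_leaves_Suc by (subst sum.reindex[OF inj_on_Cons_pair]) (simp add: case_prod_beta)
  also have "\<dots> = (\<Sum>i<k. \<Sum>u\<in>tree_leaves k d. h u)"
    by (rule sum.cartesian_product[symmetric])
  finally show ?thesis by simp
qed

lemma labeling_tl_leaf:
  "\<tau> \<in> labelings k d \<Longrightarrow> v \<in> tree_leaves k (Suc d) \<Longrightarrow> \<tau> (tl v) \<in> {0, 1}"
  unfolding labelings_def using tl_leaf_in_tree_vertices by blast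

lemma sum_PiE_merge:
  assumes "I \<inter> J = {}"
  shows "(\<Sum>\<sigma>\<in>PiE (I \<union> J) S. F \<sigma>) = (\<Sum>x\<in>PiE I S. \<Sum>y\<in>PiE J S. F (merge I J (x, y)))"
proof -
  have "bij_betw (merge I J) (PiE I S \<times> PiE J S) (PiE (I \<union> J) S)"
  proof (rule bij_betwI')
    fix p q assume p: "p \<in> PiE I S \<times> PiE J S" and q: "q \<in> PiE I S \<times> PiE J S"
    show "(merge I J p = merge I J q) = (p = q)"
    proof
      assume eq: "merge I J p = merge I J q"
      obtain x y x' y' where pq: "p = (x, y)" "q = (x', y')" by fastforce
      have "restrict x I = restrict x' I" and "restrict y J = restrict y' J"
        using arg_cong[OF eq, of "\<lambda>f. restrict f I"] arg_cong[OF eq, of "\<lambda>f. restrict f J"]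
        assms pq by simp_all
      moreover have "x \<in> PiE I S" "x' \<in> PiE I S" "y \<in> PiE J S" "y' \<in> PiE J S"
        using p q pq by auto
      ultimately show "p = q"
        using pq by (metis PiE_restrict)
    qed simp
  next
    fix p assume "p \<in> PiE I S \<times> PiE J S"
    then show "merge I J p \<in> PiE (I \<union> J) S"
      using assms by (cases p) (auto simp: PiE_iff split_merge)
  next
    fix \<sigma> assume \<sigma>: "\<sigma> \<in> PiE (I \<union> J) S"
    then have "\<sigma> = merge I J (restrict \<sigma> I, restrict \<sigma> J)" by simp
    moreover have "(restrict \<sigma> I, restrict \<sigma> J) \<in> PiE I S \<times> PiE J S"
      using \<sigma> by (auto simp: PiE_iff)
    ultimately show "\<exists>p \<in> PiE I S \<times> PiE J S. \<sigma> = merge I J p" by blast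
  qed
  then show ?thesis
    by (simp add: sum.reindex_bij_betw[symmetric] sum.cartesian_product case_prod_beta)
qed

lemma sum_PiE_prod_mult_prod:
  fixes p g :: "'a \<Rightarrow> 'b \<Rightarrow> 'c :: comm_semiring_1"
  assumes B: "finite B" and S: "finite S" and W: "W \<subseteq> B"
    and p: "\<And>v. v \<in> B - W \<Longrightarrow> (\<Sum>s\<in>S. p v s) = 1"
  shows "(\<Sum>\<eta>\<in>PiE B (\<lambda>_. S). (\<Prod>v\<in>B. p v (\<eta> v)) * (\<Prod>w\<in>W. g w (\<eta> w)))
       = (\<Prod>w\<in>W. \<Sum>s\<in>S. p w s * g w s)"
proof -
  have prod_W: "(\<Prod>w\<in>W. h w) = (\<Prod>v\<in>B. if v \<in> W then h v else 1)" for h :: "'a \<Rightarrow> 'c"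
    using prod.inter_restrict[OF B, of h W] W by (simp add: Int_absorb1)
  have "(\<Sum>\<eta>\<in>PiE B (\<lambda>_. S). (\<Prod>v\<in>B. p v (\<eta> v)) * (\<Prod>w\<in>W. g w (\<eta> w)))
      = (\<Sum>\<eta>\<in>PiE B (\<lambda>_. S). \<Prod>v\<in>B. p v (\<eta> v) * (if v \<in> W then g v (\<eta> v) else 1))"
    by (simp only: prod_W prod.distrib[symmetric])
  also have "\<dots> = (\<Prod>v\<in>B. \<Sum>s\<in>S. p v s * (if v \<in> W then g v s else 1))"
    by (rule prod_sum_PiE[symmetric]) (use B S in auto)
  also have "\<dots> = (\<Prod>v\<in>B. if v \<in> W then \<Sum>s\<in>S. p v s * g v s else 1)"
    by (rule prod.cong) (simp_all add: p)
  finally show ?thesis by (simp only: prod_W)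
qed

definition spin_sign :: "nat \<Rightarrow> real" where
  "spin_sign s = 2 * real s - 1"

lemma spin_sign_square: "s \<in> {0, 1} \<Longrightarrow> spin_sign s * spin_sign s = 1"
  by (auto simp: spin_sign_def)

text \<open>Expectation over the spins \<open>\<eta>\<close> on a generation \<open>B\<close>, each drawn independently from
  the spin \<open>a v\<close> of its parent through the edge channel.\<close>

definition offspring_expectation ::
  "real \<Rightarrow> 'a set \<Rightarrow> ('a \<Rightarrow> nat) \<Rightarrow> (('a \<Rightarrow> nat) \<Rightarrow> real) \<Rightarrow> real" where
  "offspring_expectation \<theta> B a F =
     (\<Sum>\<eta>\<in>PiE B (\<lambda>_. {0, 1}). (\<Prod>v\<in>B. edge_prob \<theta> (a v) (\<eta> v)) * F \<eta>)"

lemma offspring_expectation_sum: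
  "offspring_expectation \<theta> B a (\<lambda>\<eta>. \<Sum>w\<in>W. F w \<eta>) = (\<Sum>w\<in>W. offspring_expectation \<theta> B a (F w))"
  unfolding offspring_expectation_def by (simp add: sum_distrib_left sum.swap[where A = W])

lemma offspring_expectation_mult_left:
  "offspring_expectation \<theta> B a (\<lambda>\<eta>. c * F \<eta>) = c * offspring_expectation \<theta> B a F"
  unfolding offspring_expectation_def by (simp add: sum_distrib_left mult_ac)

context
  fixes B :: "'a set" and a :: "'a \<Rightarrow> nat"
  assumes finite_B: "finite B" and parent_spins: "\<And>v. v \<in> B \<Longrightarrow> a v \<in> {0, 1}"
begin

lemma offspring_expectation_prod:
  assumes "W \<subseteq> B"
  shows "offspring_expectation \<theta> B a (\<lambda>\<eta>. \<Prod>w\<in>W. g w (\<eta> w))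
       = (\<Prod>w\<in>W. \<Sum>s\<in>{0, 1}. edge_prob \<theta> (a w) s * g w s)"
  unfolding offspring_expectation_def
proof (rule sum_PiE_prod_mult_prod[OF finite_B _ assms])
  fix v assume "v \<in> B - W"
  then show "(\<Sum>s\<in>{0, 1}. edge_prob \<theta> (a v) s) = 1"
    using parent_spins[of v] by (auto simp: edge_prob_def field_simps)
qed simp

lemma offspring_expectation_const: "offspring_expectation \<theta> B a (\<lambda>_. c) = c"
  using offspring_expectation_prod[of "{}" \<theta>] offspring_expectation_mult_left[of \<theta> B a c "\<lambda>_. 1"]
  by simp

lemma offspring_expectation_spin:
  assumes "w \<in> B"
  shows "offspring_expectation \<theta> B a (\<lambda>\<eta>. spin_sign (\<eta> w)) = \<theta> * spin_sign (a w)"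
  using offspring_expectation_prod[of "{w}" \<theta> "\<lambda>_. spin_sign"] assms parent_spins[OF assms]
  by (auto simp: edge_prob_def spin_sign_def field_simps)

lemma offspring_expectation_spin_square:
  assumes "w \<in> B"
  shows "offspring_expectation \<theta> B a (\<lambda>\<eta>. spin_sign (\<eta> w) * spin_sign (\<eta> w)) = 1"
  using offspring_expectation_prod[of "{w}" \<theta> "\<lambda>_ s. spin_sign s * spin_sign s"]
    assms parent_spins[OF assms]
  by (auto simp: edge_prob_def spin_sign_def field_simps)

lemma offspring_expectation_spin_pair:
  assumes "w \<in> B" "w' \<in> B" "w \<noteq> w'"
  shows "offspring_expectation \<theta> B a (\<lambda>\<eta>. spin_sign (\<eta> w) * spin_sign (\<eta> w'))
       = \<theta>\<^sup>2 * (spin_sign (a w) * spin_sign (a w'))"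
  using offspring_expectation_prod[of "{w, w'}" \<theta> "\<lambda>_. spin_sign"] assms
    parent_spins[OF assms(1)] parent_spins[OF assms(2)]
  by (auto simp: edge_prob_def spin_sign_def field_simps power2_eq_square)

lemma offspring_expectation_magnetization:
  "offspring_expectation \<theta> B a (\<lambda>\<eta>. \<Sum>w\<in>B. spin_sign (\<eta> w)) = \<theta> * (\<Sum>w\<in>B. spin_sign (a w))"
  by (simp add: offspring_expectation_sum offspring_expectation_spin sum_distrib_left)

lemma offspring_expectation_magnetization_square:
  "offspring_expectation \<theta> B a (\<lambda>\<eta>. (\<Sum>w\<in>B. spin_sign (\<eta> w))\<^sup>2)
     = \<theta>\<^sup>2 * (\<Sum>w\<in>B. spin_sign (a w))\<^sup>2 + (1 - \<theta>\<^sup>2) * real (card B)"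
proof -
  have "offspring_expectation \<theta> B a (\<lambda>\<eta>. (\<Sum>w\<in>B. spin_sign (\<eta> w))\<^sup>2)
      = (\<Sum>w\<in>B. \<Sum>w'\<in>B. offspring_expectation \<theta> B a (\<lambda>\<eta>. spin_sign (\<eta> w) * spin_sign (\<eta> w')))"
    by (simp add: power2_eq_square sum_product offspring_expectation_sum)
  also have "\<dots> = (\<Sum>w\<in>B. \<Sum>w'\<in>B. \<theta>\<^sup>2 * (spin_sign (a w) * spin_sign (a w'))
                      + (if w = w' then 1 - \<theta>\<^sup>2 else 0))"
  proof (intro sum.cong refl)
    fix w w' assume "w \<in> B" "w' \<in> B"
    moreover have "spin_sign (a w) * spin_sign (a w) = 1"
      using \<open>w \<in> B\<close> by (intro spin_sign_square parent_spins)
    ultimately show "offspring_expectation \<theta> B a (\<lambda>\<eta>. spin_sign (\<eta> w) * spin_sign (\<eta> w'))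
        = \<theta>\<^sup>2 * (spin_sign (a w) * spin_sign (a w')) + (if w = w' then 1 - \<theta>\<^sup>2 else 0)"
      by (cases "w = w'")
        (simp_all add: offspring_expectation_spin_square offspring_expectation_spin_pair)
  qed
  also have "\<dots> = \<theta>\<^sup>2 * (\<Sum>w\<in>B. spin_sign (a w))\<^sup>2 + (1 - \<theta>\<^sup>2) * real (card B)"
    using finite_B
    by (simp add: sum.distrib power2_eq_square sum_product sum_distrib_left[symmetric])
  finally show ?thesis .
qed

end

text \<open>Twice the broadcast weight on configurations with root spin 1, i.e. the law of the
  broadcast process conditioned on \<open>\<sigma>\<^sub>\<rho> = 1\<close>.\<close>

definition rooted_weight :: "nat \<Rightarrow> nat \<Rightarrow> real \<Rightarrow> (nat list \<Rightarrow> nat) \<Rightarrow> real" where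
  "rooted_weight k d \<theta> \<sigma> =
     (if \<sigma> [] = 1 then \<Prod>v\<in>tree_vertices k d - {[]}. edge_prob \<theta> (\<sigma> (tl v)) (\<sigma> v) else 0)"

definition rooted_expectation ::
  "nat \<Rightarrow> nat \<Rightarrow> real \<Rightarrow> ((nat list \<Rightarrow> nat) \<Rightarrow> real) \<Rightarrow> real" where
  "rooted_expectation k d \<theta> f = (\<Sum>\<sigma>\<in>labelings k d. rooted_weight k d \<theta> \<sigma> * f \<sigma>)"

definition magnetization :: "nat \<Rightarrow> nat \<Rightarrow> (nat list \<Rightarrow> nat) \<Rightarrow> real" where
  "magnetization k d \<sigma> = (\<Sum>v\<in>tree_leaves k d. spin_sign (\<sigma> v))"

lemma magnetization_eq: "magnetization k d \<sigma> = 2 * real (\<Sum>v\<in>tree_leaves k d. \<sigma> v) - real k ^ d"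
  by (simp add: magnetization_def spin_sign_def sum_subtractf sum_distrib_left card_tree_leaves)

lemma rooted_expectation_cong:
  "(\<And>\<sigma>. \<sigma> \<in> labelings k d \<Longrightarrow> f \<sigma> = g \<sigma>) \<Longrightarrow> rooted_expectation k d \<theta> f = rooted_expectation k d \<theta> g"
  unfolding rooted_expectation_def by simp

lemma rooted_expectation_add:
  "rooted_expectation k d \<theta> (\<lambda>\<sigma>. f \<sigma> + g \<sigma>)
     = rooted_expectation k d \<theta> f + rooted_expectation k d \<theta> g"
  unfolding rooted_expectation_def by (simp add: distrib_left sum.distrib)

lemma rooted_expectation_diff:
  "rooted_expectation k d \<theta> (\<lambda>\<sigma>. f \<sigma> - g \<sigma>)
     = rooted_expectation k d \<theta> f - rooted_expectation k d \<theta> g"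
  unfolding rooted_expectation_def by (simp add: right_diff_distrib sum_subtractf)

lemma rooted_expectation_mult_left:
  "rooted_expectation k d \<theta> (\<lambda>\<sigma>. c * f \<sigma>) = c * rooted_expectation k d \<theta> f"
  unfolding rooted_expectation_def by (simp add: sum_distrib_left mult_ac)

lemma edge_prob_nonneg: "\<bar>\<theta>\<bar> \<le> 1 \<Longrightarrow> 0 \<le> edge_prob \<theta> a b"
  by (simp add: edge_prob_def abs_le_iff)

lemma rooted_expectation_mono:
  assumes "\<bar>\<theta>\<bar> \<le> 1" and "\<And>\<sigma>. \<sigma> \<in> labelings k d \<Longrightarrow> f \<sigma> \<le> g \<sigma>"
  shows "rooted_expectation k d \<theta> f \<le> rooted_expectation k d \<theta> g"
proof -
  have "0 \<le> rooted_weight k d \<theta> \<sigma>" for \<sigma>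
    using assms(1) unfolding rooted_weight_def by (auto intro!: prod_nonneg edge_prob_nonneg)
  then show ?thesis
    unfolding rooted_expectation_def by (intro sum_mono mult_left_mono assms(2))
qed

lemma rooted_expectation_0: "rooted_expectation k 0 \<theta> f = f (restrict (\<lambda>_. 1) {[]})"
proof -
  have "{\<sigma> \<in> labelings k 0. \<sigma> [] = 1} = {restrict (\<lambda>_. 1) {[]}}"
    by (auto simp: labelings_def tree_vertices_0 PiE_iff extensional_def fun_eq_iff)
  then have "(\<Sum>\<sigma>\<in>labelings k 0. if \<sigma> [] = 1 then f \<sigma> else 0) = f (restrict (\<lambda>_. 1) {[]})"
    by (simp add: sum.inter_filter[OF finite_labelings, symmetric])
  moreover have "rooted_weight k 0 \<theta> \<sigma> * f \<sigma> = (if \<sigma> [] = 1 then f \<sigma> else 0)" for \<sigma>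
    by (simp add: rooted_weight_def tree_vertices_0)
  ultimately show ?thesis
    unfolding rooted_expectation_def by (simp only:)
qed

abbreviation extend_labeling ::
  "nat \<Rightarrow> nat \<Rightarrow> (nat list \<Rightarrow> nat) \<Rightarrow> (nat list \<Rightarrow> nat) \<Rightarrow> nat list \<Rightarrow> nat" where
  "extend_labeling k d \<tau> \<eta> \<equiv> merge (tree_vertices k d) (tree_leaves k (Suc d)) (\<tau>, \<eta>)"

lemma rooted_weight_extend_labeling:
  "rooted_weight k (Suc d) \<theta> (extend_labeling k d \<tau> \<eta>)
     = rooted_weight k d \<theta> \<tau> * (\<Prod>v\<in>tree_leaves k (Suc d). edge_prob \<theta> (\<tau> (tl v)) (\<eta> v))"
proof -
  let ?\<sigma> = "extend_labeling k d \<tau> \<eta>"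
  note disj = tree_vertices_Int_leaves_Suc[of k d]
  have "tree_vertices k (Suc d) - {[]} = (tree_vertices k d - {[]}) \<union> tree_leaves k (Suc d)"
    using Nil_notin_tree_leaves_Suc[of k d] by (auto simp: tree_vertices_Suc)
  then have "(\<Prod>v\<in>tree_vertices k (Suc d) - {[]}. edge_prob \<theta> (?\<sigma> (tl v)) (?\<sigma> v))
      = (\<Prod>v\<in>tree_vertices k d - {[]}. edge_prob \<theta> (?\<sigma> (tl v)) (?\<sigma> v))
        * (\<Prod>v\<in>tree_leaves k (Suc d). edge_prob \<theta> (?\<sigma> (tl v)) (?\<sigma> v))"
    using disj
    by (simp add: prod.union_disjoint finite_tree_vertices finite_tree_leaves Diff_Int_distrib2)
  also have "\<dots> = (\<Prod>v\<in>tree_vertices k d - {[]}. edge_prob \<theta> (\<tau> (tl v)) (\<tau> v))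
        * (\<Prod>v\<in>tree_leaves k (Suc d). edge_prob \<theta> (\<tau> (tl v)) (\<eta> v))"
    using disj by (intro arg_cong2[where f = "(*)"] prod.cong)
      (auto simp: tl_in_tree_vertices tl_leaf_in_tree_vertices)
  finally show ?thesis
    using disj by (simp add: rooted_weight_def Nil_in_tree_vertices)
qed

lemma magnetization_extend_labeling:
  "magnetization k (Suc d) (extend_labeling k d \<tau> \<eta>) = (\<Sum>w\<in>tree_leaves k (Suc d). spin_sign (\<eta> w))"
  unfolding magnetization_def using tree_vertices_Int_leaves_Suc[of k d] by (intro sum.cong) auto

lemma rooted_expectation_Suc:
  "rooted_expectation k (Suc d) \<theta> f = rooted_expectation k d \<theta> (\<lambda>\<tau>.
     offspring_expectation \<theta> (tree_leaves k (Suc d)) (\<lambda>v. \<tau> (tl v))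
       (\<lambda>\<eta>. f (extend_labeling k d \<tau> \<eta>)))"
  unfolding rooted_expectation_def offspring_expectation_def labelings_def tree_vertices_Suc
    sum_PiE_merge[OF tree_vertices_Int_leaves_Suc] rooted_weight_extend_labeling
  by (simp add: sum_distrib_left mult.assoc)

lemma rooted_expectation_Suc_magnetization:
  assumes "\<And>\<tau>. (\<And>v. v \<in> tree_leaves k (Suc d) \<Longrightarrow> \<tau> (tl v) \<in> {0, 1}) \<Longrightarrow>
    offspring_expectation \<theta> (tree_leaves k (Suc d)) (\<lambda>v. \<tau> (tl v))
      (\<lambda>\<eta>. H (\<Sum>w\<in>tree_leaves k (Suc d). spin_sign (\<eta> w))) = g \<tau>"
  shows "rooted_expectation k (Suc d) \<theta> (\<lambda>\<sigma>. H (magnetization k (Suc d) \<sigma>))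
       = rooted_expectation k d \<theta> g"
  unfolding rooted_expectation_Suc magnetization_extend_labeling
proof (rule rooted_expectation_cong)
  fix \<tau> assume "\<tau> \<in> labelings k d"
  then show "offspring_expectation \<theta> (tree_leaves k (Suc d)) (\<lambda>v. \<tau> (tl v))
      (\<lambda>\<eta>. H (\<Sum>w\<in>tree_leaves k (Suc d). spin_sign (\<eta> w))) = g \<tau>"
    by (intro assms labeling_tl_leaf)
qed

lemma sum_spin_sign_parents:
  "(\<Sum>w\<in>tree_leaves k (Suc d). spin_sign (\<tau> (tl w))) = real k * magnetization k d \<tau>"
  unfolding magnetization_def by (rule sum_tree_leaves_Suc_tl)

lemma rooted_expectation_one: "rooted_expectation k d \<theta> (\<lambda>_. 1) = 1"
proof (induction d)
  case (Suc d)
  have "rooted_expectation k (Suc d) \<theta> (\<lambda>_. 1) = rooted_expectation k d \<theta> (\<lambda>_. 1)"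
    by (rule rooted_expectation_Suc_magnetization[where H = "\<lambda>_. 1"])
      (simp add: offspring_expectation_const finite_tree_leaves)
  with Suc show ?case by simp
qed (simp add: rooted_expectation_0)

lemma rooted_expectation_magnetization:
  "rooted_expectation k d \<theta> (\<lambda>\<sigma>. magnetization k d \<sigma>) = (real k * \<theta>) ^ d"
proof (induction d)
  case 0
  then show ?case
    by (simp add: rooted_expectation_0 magnetization_def tree_leaves_0 spin_sign_def)
next
  case (Suc d)
  have "rooted_expectation k (Suc d) \<theta> (\<lambda>\<sigma>. magnetization k (Suc d) \<sigma>)
      = rooted_expectation k d \<theta> (\<lambda>\<tau>. real k * \<theta> * magnetization k d \<tau>)"
    by (rule rooted_expectation_Suc_magnetization[where H = "\<lambda>x. x"])
      (simp add: offspring_expectation_magnetization finite_tree_leaves sum_spin_sign_parents)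
  with Suc show ?case by (simp add: rooted_expectation_mult_left)
qed

lemma rooted_expectation_magnetization_square_Suc:
  "rooted_expectation k (Suc d) \<theta> (\<lambda>\<sigma>. (magnetization k (Suc d) \<sigma>)\<^sup>2)
     = (real k * \<theta>)\<^sup>2 * rooted_expectation k d \<theta> (\<lambda>\<sigma>. (magnetization k d \<sigma>)\<^sup>2)
       + (1 - \<theta>\<^sup>2) * real k ^ Suc d"
proof -
  have "rooted_expectation k (Suc d) \<theta> (\<lambda>\<sigma>. (magnetization k (Suc d) \<sigma>)\<^sup>2)
      = rooted_expectation k d \<theta> (\<lambda>\<tau>. (real k * \<theta>)\<^sup>2 * (magnetization k d \<tau>)\<^sup>2
          + (1 - \<theta>\<^sup>2) * real k ^ Suc d * 1)"
    by (rule rooted_expectation_Suc_magnetization)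
      (simp add: offspring_expectation_magnetization_square finite_tree_leaves
        sum_spin_sign_parents card_tree_leaves power_mult_distrib)
  then show ?thesis
    by (simp only: rooted_expectation_add rooted_expectation_mult_left rooted_expectation_one)
qed

lemma rooted_variance_magnetization:
  "(\<theta>\<^sup>2 * real k - 1)
       * (rooted_expectation k d \<theta> (\<lambda>\<sigma>. (magnetization k d \<sigma>)\<^sup>2) - ((real k * \<theta>) ^ d)\<^sup>2)
     = (1 - \<theta>\<^sup>2) * (((real k * \<theta>) ^ d)\<^sup>2 - real k ^ d)"
proof (induction d)
  case 0
  then show ?case
    by (simp add: rooted_expectation_0 magnetization_def tree_leaves_0 spin_sign_def)
next
  case (Suc d)
  define m where "m = (real k * \<theta>) ^ d"
  define V where "V = rooted_expectation k d \<theta> (\<lambda>\<sigma>. (magnetization k d \<sigma>)\<^sup>2)"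
  have IH: "(\<theta>\<^sup>2 * real k - 1) * (V - m\<^sup>2) = (1 - \<theta>\<^sup>2) * (m\<^sup>2 - real k ^ d)"
    using Suc.IH by (simp only: V_def m_def)
  have "(\<theta>\<^sup>2 * real k - 1) * (rooted_expectation k (Suc d) \<theta> (\<lambda>\<sigma>. (magnetization k (Suc d) \<sigma>)\<^sup>2)
        - ((real k * \<theta>) ^ Suc d)\<^sup>2)
      = (real k * \<theta>)\<^sup>2 * ((\<theta>\<^sup>2 * real k - 1) * (V - m\<^sup>2))
        + (\<theta>\<^sup>2 * real k - 1) * (1 - \<theta>\<^sup>2) * real k ^ Suc d"
    unfolding rooted_expectation_magnetization_square_Suc V_def[symmetric] m_def
    by (simp add: algebra_simps power2_eq_square)
  also have "\<dots> = (1 - \<theta>\<^sup>2) * (((real k * \<theta>) ^ Suc d)\<^sup>2 - real k ^ Suc d)"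
    unfolding IH unfolding m_def by (simp add: algebra_simps power2_eq_square)
  finally show ?case .
qed

lemma rooted_expectation_centered_square:
  "rooted_expectation k d \<theta> (\<lambda>\<sigma>. (f \<sigma> - rooted_expectation k d \<theta> f)\<^sup>2)
     = rooted_expectation k d \<theta> (\<lambda>\<sigma>. (f \<sigma>)\<^sup>2) - (rooted_expectation k d \<theta> f)\<^sup>2"
proof -
  let ?m = "rooted_expectation k d \<theta> f"
  have "rooted_expectation k d \<theta> (\<lambda>\<sigma>. (f \<sigma> - ?m)\<^sup>2)
      = rooted_expectation k d \<theta> (\<lambda>\<sigma>. (f \<sigma>)\<^sup>2 - 2 * ?m * f \<sigma> + ?m\<^sup>2 * 1)"
    by (rule rooted_expectation_cong) (simp add: power2_eq_square algebra_simps)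
  also have "\<dots> = rooted_expectation k d \<theta> (\<lambda>\<sigma>. (f \<sigma>)\<^sup>2) - ?m\<^sup>2"
    unfolding rooted_expectation_add rooted_expectation_diff rooted_expectation_mult_left
      rooted_expectation_one by (simp add: power2_eq_square)
  finally show ?thesis .
qed

lemma rooted_expectation_indicator_nonpos_le:
  assumes "\<bar>\<theta>\<bar> \<le> 1" and "0 < m"
  shows "rooted_expectation k d \<theta> (\<lambda>\<sigma>. of_bool (Z \<sigma> \<le> 0))
       \<le> rooted_expectation k d \<theta> (\<lambda>\<sigma>. (Z \<sigma> - m)\<^sup>2) / m\<^sup>2"
proof -
  have "of_bool (Z \<sigma> \<le> 0) \<le> 1 / m\<^sup>2 * (Z \<sigma> - m)\<^sup>2" for \<sigma>
  proof (cases "Z \<sigma> \<le> 0")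
    case True
    then have "0 \<le> Z \<sigma> * (Z \<sigma> - 2 * m)"
      using \<open>0 < m\<close> by (intro mult_nonpos_nonpos) auto
    then have "m\<^sup>2 \<le> (Z \<sigma> - m)\<^sup>2"
      by (simp add: power2_eq_square algebra_simps)
    then show ?thesis
      using True \<open>0 < m\<close> by (simp add: field_simps)
  qed simp
  then have "rooted_expectation k d \<theta> (\<lambda>\<sigma>. of_bool (Z \<sigma> \<le> 0))
      \<le> rooted_expectation k d \<theta> (\<lambda>\<sigma>. 1 / m\<^sup>2 * (Z \<sigma> - m)\<^sup>2)"
    by (intro rooted_expectation_mono assms(1))
  then show ?thesis
    unfolding rooted_expectation_mult_left by simp
qed

lemma rooted_variance_magnetization_le:
  assumes "\<bar>\<theta>\<bar> \<le> 1" and "1 < \<theta>\<^sup>2 * real k"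
  shows "rooted_expectation k d \<theta> (\<lambda>\<sigma>. (magnetization k d \<sigma>)\<^sup>2) - ((real k * \<theta>) ^ d)\<^sup>2
       \<le> ((real k * \<theta>) ^ d)\<^sup>2 / (\<theta>\<^sup>2 * real k - 1)"
proof -
  let ?M = "((real k * \<theta>) ^ d)\<^sup>2"
  have "0 \<le> 1 - \<theta>\<^sup>2"
    using assms(1) by (simp add: abs_square_le_1)
  then have "0 \<le> (1 - \<theta>\<^sup>2) * real k ^ d"
    by simp
  moreover have "(1 - \<theta>\<^sup>2) * ?M \<le> ?M"
    by (simp add: algebra_simps)
  ultimately have "(1 - \<theta>\<^sup>2) * (?M - real k ^ d) \<le> ?M"
    by (simp add: right_diff_distrib)
  then show ?thesis
    using rooted_variance_magnetization[of \<theta> k d] assms(2)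
    by (simp add: pos_le_divide_eq mult.commute)
qed

lemma broadcast_prob_root_one:
  "broadcast_prob k d \<theta> (\<lambda>\<sigma>. E \<sigma> \<and> \<sigma> [] = 1) = rooted_expectation k d \<theta> (\<lambda>\<sigma>. of_bool (E \<sigma>)) / 2"
proof -
  have "broadcast_prob k d \<theta> (\<lambda>\<sigma>. E \<sigma> \<and> \<sigma> [] = 1)
      = (\<Sum>\<sigma>\<in>labelings k d. if E \<sigma> \<and> \<sigma> [] = 1 then broadcast_weight k d \<theta> \<sigma> else 0)"
    unfolding broadcast_prob_def by (rule sum.inter_filter[OF finite_labelings])
  also have "\<dots> = (\<Sum>\<sigma>\<in>labelings k d. rooted_weight k d \<theta> \<sigma> * of_bool (E \<sigma>) / 2)"
    by (rule sum.cong) (auto simp: broadcast_weight_def rooted_weight_def)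
  finally show ?thesis
    by (simp add: rooted_expectation_def sum_divide_distrib)
qed

lemma broadcast_cond_prob_root_one:
  "broadcast_cond_prob k d \<theta> E (\<lambda>\<sigma>. \<sigma> [] = 1) = rooted_expectation k d \<theta> (\<lambda>\<sigma>. of_bool (E \<sigma>))"
proof -
  have half: "broadcast_prob k d \<theta> (\<lambda>\<sigma>. \<sigma> [] = 1) = 1 / 2"
    using broadcast_prob_root_one[of k d \<theta> "\<lambda>_. True"] by (simp add: rooted_expectation_one)
  show ?thesis
    unfolding broadcast_cond_prob_def broadcast_prob_root_one half by simp
qed

theorem mainTheorem10:
  fixes d k :: nat and \<theta> :: real
  assumes "k \<ge> 2" and "0 < \<theta>" and "\<theta> \<le> 1" and "real k * \<theta>^2 > 2"
  shows "broadcast_cond_prob k d \<theta>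
           (\<lambda>\<sigma>. real (\<Sum>v \<in> tree_leaves k d. \<sigma> v) \<le> real k ^ d / 2)
           (\<lambda>\<sigma>. \<sigma> [] = 1)
         \<le> 1 / (\<theta>^2 * real k - 1)"
proof -
  define m where "m = (real k * \<theta>) ^ d"
  have \<theta>: "\<bar>\<theta>\<bar> \<le> 1" and m: "0 < m"
    using assms by (simp_all add: m_def)
  have "broadcast_cond_prob k d \<theta> (\<lambda>\<sigma>. real (\<Sum>v \<in> tree_leaves k d. \<sigma> v) \<le> real k ^ d / 2)
      (\<lambda>\<sigma>. \<sigma> [] = 1) = rooted_expectation k d \<theta> (\<lambda>\<sigma>. of_bool (magnetization k d \<sigma> \<le> 0))"
    unfolding broadcast_cond_prob_root_one
    by (rule rooted_expectation_cong) (simp add: magnetization_eq)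
  also have "\<dots> \<le> rooted_expectation k d \<theta> (\<lambda>\<sigma>. (magnetization k d \<sigma> - m)\<^sup>2) / m\<^sup>2"
    by (rule rooted_expectation_indicator_nonpos_le[OF \<theta> m])
  also have "\<dots> = (rooted_expectation k d \<theta> (\<lambda>\<sigma>. (magnetization k d \<sigma>)\<^sup>2) - m\<^sup>2) / m\<^sup>2"
    using rooted_expectation_centered_square[of k d \<theta> "magnetization k d"]
    by (simp add: m_def rooted_expectation_magnetization)
  also have "\<dots> \<le> m\<^sup>2 / (\<theta>^2 * real k - 1) / m\<^sup>2"
    using rooted_variance_magnetization_le[OF \<theta>, of k d] assms(4)
    by (intro divide_right_mono) (simp_all add: m_def mult.commute)
  finally show ?thesis
    using m by simp
qed

end
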